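(* Let $n \ge 1$. If a partial coloring of an $n\times n$ square $A$ uniquely extends to $L(n,2n-2)$, then $A$ has at most $\frac{8n}{5}$ uncolored entries (hence at most $\lfloor 8n/5\rfloor$ uncolored entries).
   Context: For positive integers $n,k$, let $\mathcal{L}_{n,k}$ be the set of $n\times n$ squares all of whose entries are colored with colors from a fixed set of $k$ colors $\{1,\dots,k\}$ such that any two entries in the same row, or in the same column, have different colors. Entries are indexed $(i,j)$, $i$ the row and $j$ the column, $1\le i,j\le n$. A partial coloring of an $n\times n$ square assigns colors from $\{1,\dots,k\}$ to some of its entries; the remaining entries are called uncolored. A partial coloring extends to $L(n,k)$ if the uncolored entries can be colored so that the resulting fully colored square lies in $\mathcal{L}_{n,k}$ (keeping the given colors), and it uniquely extends to $L(n,k)$ if there is exactly one such way. *)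

theory Defs
  imports Complex_Main
begin

text \<open>Entries of an n x n square are indexed by (i,j) with 1 \<le> i,j \<le> n.
A fully colored square is a function on index pairs; to make it a unique
object we require it to be 0 outside the index set.\<close>

definition cells :: "nat \<Rightarrow> (nat \<times> nat) set" where
  "cells n = {1..n} \<times> {1..n}"

definition latin_like :: "nat \<Rightarrow> nat \<Rightarrow> (nat \<times> nat \<Rightarrow> nat) \<Rightarrow> bool" where
  "latin_like n k L \<longleftrightarrow>
     (\<forall>c. c \<notin> cells n \<longrightarrow> L c = 0) \<and>
     (\<forall>c\<in>cells n. L c \<in> {1..k}) \<and>
     (\<forall>i\<in>{1..n}. \<forall>j\<in>{1..n}. \<forall>j'\<in>{1..n}. j \<noteq> j' \<longrightarrow> L (i,j) \<noteq> L (i,j')) \<and>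
     (\<forall>j\<in>{1..n}. \<forall>i\<in>{1..n}. \<forall>i'\<in>{1..n}. i \<noteq> i' \<longrightarrow> L (i,j) \<noteq> L (i',j))"

definition partial_coloring :: "nat \<Rightarrow> nat \<Rightarrow> (nat \<times> nat \<Rightarrow> nat option) \<Rightarrow> bool" where
  "partial_coloring n k A \<longleftrightarrow>
     (\<forall>c. c \<notin> cells n \<longrightarrow> A c = None) \<and>
     (\<forall>c\<in>cells n. \<forall>x. A c = Some x \<longrightarrow> x \<in> {1..k})"

definition uncolored :: "nat \<Rightarrow> (nat \<times> nat \<Rightarrow> nat option) \<Rightarrow> (nat \<times> nat) set" where
  "uncolored n A = {c \<in> cells n. A c = None}"

definition extensions :: "nat \<Rightarrow> nat \<Rightarrow> (nat \<times> nat \<Rightarrow> nat option) \<Rightarrow> (nat \<times> nat \<Rightarrow> nat) set" where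
  "extensions n k A = {L. latin_like n k L \<and> (\<forall>c\<in>cells n. \<forall>x. A c = Some x \<longrightarrow> L c = x)}"

definition uniquely_extends :: "nat \<Rightarrow> nat \<Rightarrow> (nat \<times> nat \<Rightarrow> nat option) \<Rightarrow> bool" where
  "uniquely_extends n k A \<longleftrightarrow> (\<exists>!L. L \<in> extensions n k A)"

end

theory Submission
  imports Defs
begin

text \<open>
  Let L be the unique completion and U the set of uncolored cells. A recoloring of cells of U
  that creates no conflict in their rows and columns must be trivial. Recoloring a single cell
  shows that every color occurs in the row or in the column of an uncolored cell, so with
  2n - 2 colors that row and column share at most two colors. Together with this, swapping
  two uncolored cells of a line, cycling three of them and rotating an uncolored rectangle
  show that U has no three cells on a line, no rectangle, and no staircase of five cells
  alternating between rows and columns.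

  Call two cells of U mates if they share a line. Each cell has at most one row mate and one
  column mate, and by the excluded configurations a cell with both has a mate with only one.
  Counting line by line, 2|U| is at most 2n plus the number of cells with a row mate, and
  likewise for columns; an injection from cells with two mates into cells with one bounds
  the sum of these two numbers by 3|U|/2. Hence 5|U| \<le> 8n.
\<close>

section \<open>Sets with at most two points on each line\<close>

definition has_mate :: "('a \<Rightarrow> 'b) \<Rightarrow> 'a set \<Rightarrow> 'a \<Rightarrow> bool" where
  "has_mate f U x \<longleftrightarrow> (\<exists>y\<in>U. y \<noteq> x \<and> f y = f x)"

definition at_most_two_per_fibre :: "('a \<Rightarrow> 'b) \<Rightarrow> 'a set \<Rightarrow> bool" where
  "at_most_two_per_fibre f U \<longleftrightarrow>
     (\<forall>x\<in>U. \<forall>y\<in>U. \<forall>z\<in>U. f y = f x \<and> f z = f x \<longrightarrow> x = y \<or> x = z \<or> y = z)"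

lemma card_fibre_le_two:
  assumes "finite U" and "at_most_two_per_fibre f U"
  shows "card {x\<in>U. f x = i} \<le> 2"
proof (rule ccontr)
  assume "\<not> ?thesis"
  then obtain T where T: "T \<subseteq> {x\<in>U. f x = i}" "card T = 3"
    using obtain_subset_with_card_n[of 3 "{x\<in>U. f x = i}"] by auto
  then obtain x y z where "T = {x, y, z}" "x \<noteq> y" "y \<noteq> z" "x \<noteq> z"
    by (auto simp: card_3_iff)
  with T assms(2) show False
    unfolding at_most_two_per_fibre_def by auto
qed

lemma two_card_le_card_mates:
  assumes U: "finite U" and I: "finite I" "f ` U \<subseteq> I" and two: "at_most_two_per_fibre f U"
  shows "2 * card U \<le> 2 * card I + card {x\<in>U. has_mate f U x}"
proof -
  let ?M = "{x\<in>U. has_mate f U x}"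
  have fibre: "2 * card {x\<in>U. f x = i} \<le> 2 + card {x\<in>?M. f x = i}" for i
  proof (cases "card {x\<in>U. f x = i} \<le> 1")
    case False
    then obtain a b where ab: "a \<in> U" "b \<in> U" "f a = i" "f b = i" "a \<noteq> b"
      using card_le_Suc0_iff_eq[of "{x\<in>U. f x = i}"] U by auto
    then have "{x\<in>?M. f x = i} = {x\<in>U. f x = i}"
      unfolding has_mate_def by auto metis
    then show ?thesis
      using card_fibre_le_two[OF U two, of i] by simp
  qed simp
  have "2 * card U = (\<Sum>i\<in>I. 2 * card {x\<in>U. f x = i})"
    using sum_fun_comp[OF U I, of "\<lambda>_. 1::nat"] by (simp add: sum_distrib_left)
  also have "\<dots> \<le> (\<Sum>i\<in>I. 2 + card {x\<in>?M. f x = i})"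
    by (rule sum_mono) (rule fibre)
  also have "\<dots> = 2 * card I + (\<Sum>i\<in>I. card {x\<in>?M. f x = i})"
    unfolding sum.distrib by simp
  also have "\<dots> = 2 * card I + card ?M"
    using sum_fun_comp[of ?M I f "\<lambda>_. 1::nat"] U I by (simp add: image_subset_iff)
  finally show ?thesis .
qed

lemma card_corners_le_card_ends:
  assumes U: "finite U"
    and two_f: "at_most_two_per_fibre f U" and two_g: "at_most_two_per_fibre g U"
    and mate: "\<And>x. x \<in> U \<Longrightarrow> has_mate f U x \<Longrightarrow> has_mate g U x \<Longrightarrow>
      \<exists>y\<in>U. y \<noteq> x \<and> (f y = f x \<and> \<not> has_mate g U y \<or> g y = g x \<and> \<not> has_mate f U y)"
  shows "card {x\<in>U. has_mate f U x \<and> has_mate g U x} \<le> card {x\<in>U. has_mate f U x \<noteq> has_mate g U x}"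
proof -
  define C where "C = {x\<in>U. has_mate f U x \<and> has_mate g U x}"
  define E where "E = {x\<in>U. has_mate f U x \<noteq> has_mate g U x}"
  have "\<forall>x\<in>C. \<exists>y. y \<in> E \<and> y \<noteq> x \<and> (f y = f x \<or> g y = g x)"
  proof
    fix x assume x: "x \<in> C"
    then obtain y where y: "y \<in> U" "y \<noteq> x"
      and line: "f y = f x \<and> \<not> has_mate g U y \<or> g y = g x \<and> \<not> has_mate f U y"
      using mate[of x] unfolding C_def by blast
    have "x \<in> U" using x unfolding C_def by simp
    then have "f y = f x \<Longrightarrow> has_mate f U y" "g y = g x \<Longrightarrow> has_mate g U y"
      using y unfolding has_mate_def by metis+
    with y line have "y \<in> E" unfolding E_def by auto
    with y line show "\<exists>y. y \<in> E \<and> y \<noteq> x \<and> (f y = f x \<or> g y = g x)" by blast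
  qed
  from bchoice[OF this] obtain p
    where p: "\<forall>x\<in>C. p x \<in> E \<and> p x \<noteq> x \<and> (f (p x) = f x \<or> g (p x) = g x)"
    by blast
  have "inj_on p C"
  proof (rule inj_onI)
    fix x x' assume x: "x \<in> C" and x': "x' \<in> C" and eq: "p x = p x'"
    let ?w = "p x"
    have w: "?w \<in> E" "?w \<noteq> x" "?w \<noteq> x'" using p x x' eq by auto
    have U: "?w \<in> U" "x \<in> U" "x' \<in> U" using w x x' unfolding C_def E_def by auto
    from w(1) have "\<not> has_mate g U ?w \<or> \<not> has_mate f U ?w" unfolding E_def by auto
    then have "f ?w = f x \<and> f ?w = f x' \<or> g ?w = g x \<and> g ?w = g x'"
    proof
      assume "\<not> has_mate g U ?w"
      then have "g ?w \<noteq> g x" "g ?w \<noteq> g x'" using U w unfolding has_mate_def by auto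
      then show ?thesis using p x x' eq by auto
    next
      assume "\<not> has_mate f U ?w"
      then have "f ?w \<noteq> f x" "f ?w \<noteq> f x'" using U w unfolding has_mate_def by auto
      then show ?thesis using p x x' eq by auto
    qed
    then show "x = x'"
      using two_f[unfolded at_most_two_per_fibre_def, rule_format, of ?w x x']
        two_g[unfolded at_most_two_per_fibre_def, rule_format, of ?w x x'] U w(2,3) by auto
  qed
  moreover have "finite E" using U unfolding E_def by simp
  ultimately have "card C \<le> card E"
    using p card_inj_on_le[of p C E] by blast
  then show ?thesis unfolding C_def E_def .
qed

lemma card_mates_le:
  assumes U: "finite U"
    and two_f: "at_most_two_per_fibre f U" and two_g: "at_most_two_per_fibre g U"
    and mate: "\<And>x. x \<in> U \<Longrightarrow> has_mate f U x \<Longrightarrow> has_mate g U x \<Longrightarrow>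
      \<exists>y\<in>U. y \<noteq> x \<and> (f y = f x \<and> \<not> has_mate g U y \<or> g y = g x \<and> \<not> has_mate f U y)"
  shows "2 * (card {x\<in>U. has_mate f U x} + card {x\<in>U. has_mate g U x}) \<le> 3 * card U"
proof -
  define F where "F = {x\<in>U. has_mate f U x}"
  define G where "G = {x\<in>U. has_mate g U x}"
  define C where "C = {x\<in>U. has_mate f U x \<and> has_mate g U x}"
  define E where "E = {x\<in>U. has_mate f U x \<noteq> has_mate g U x}"
  have sets: "F \<union> G = E \<union> C" "F \<inter> G = C" "E \<inter> C = {}" "E \<union> C \<subseteq> U"
    unfolding F_def G_def C_def E_def by auto
  have fin: "finite F" "finite G" "finite C" "finite E"
    using U unfolding F_def G_def C_def E_def by simp_all
  have "card F + card G = card (F \<union> G) + card (F \<inter> G)"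
    by (rule card_Un_Int[OF fin(1,2)])
  also have "\<dots> = card E + 2 * card C"
    unfolding sets(1,2) card_Un_disjoint[OF fin(4,3) sets(3)] by simp
  finally have "card F + card G = card E + 2 * card C" .
  moreover have "card E + card C \<le> card U"
    using card_Un_disjoint[OF fin(4,3) sets(3)] card_mono[OF U sets(4)] by simp
  moreover have "card C \<le> card E"
    unfolding C_def E_def using card_corners_le_card_ends[OF assms] .
  ultimately have "2 * card F + 2 * card G \<le> 3 * card U" by linarith
  then show ?thesis unfolding F_def G_def by (simp only: add_mult_distrib2)
qed

lemma five_card_le_eight_card:
  assumes "finite U" "finite I" "f ` U \<subseteq> I" "g ` U \<subseteq> I"
    and "at_most_two_per_fibre f U" "at_most_two_per_fibre g U"
    and "\<And>x. x \<in> U \<Longrightarrow> has_mate f U x \<Longrightarrow> has_mate g U x \<Longrightarrow>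
      \<exists>y\<in>U. y \<noteq> x \<and> (f y = f x \<and> \<not> has_mate g U y \<or> g y = g x \<and> \<not> has_mate f U y)"
  shows "5 * card U \<le> 8 * card I"
proof -
  have "2 * (card {x\<in>U. has_mate f U x} + card {x\<in>U. has_mate g U x}) \<le> 3 * card U"
    by (rule card_mates_le[OF assms(1,5,6)]) (rule assms(7))
  then show ?thesis
    using two_card_le_card_mates[OF assms(1,2,3,5)] two_card_le_card_mates[OF assms(1,2,4,6)]
    by simp
qed

section \<open>Rows and columns of a Latin-like square\<close>

definition row_colors :: "nat \<Rightarrow> (nat \<times> nat \<Rightarrow> nat) \<Rightarrow> nat \<Rightarrow> nat set" where
  "row_colors n L i = (\<lambda>j. L (i, j)) ` {1..n}"

definition col_colors :: "nat \<Rightarrow> (nat \<times> nat \<Rightarrow> nat) \<Rightarrow> nat \<Rightarrow> nat set" where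
  "col_colors n L j = (\<lambda>i. L (i, j)) ` {1..n}"

lemma row_colorsI: "j \<in> {1..n} \<Longrightarrow> L (i, j) \<in> row_colors n L i"
  unfolding row_colors_def by auto

lemma col_colorsI: "i \<in> {1..n} \<Longrightarrow> L (i, j) \<in> col_colors n L j"
  unfolding col_colors_def by auto

lemma row_colors_transpose [simp]: "row_colors n (L \<circ> prod.swap) i = col_colors n L i"
  unfolding row_colors_def col_colors_def by auto

lemma col_colors_transpose [simp]: "col_colors n (L \<circ> prod.swap) j = row_colors n L j"
  unfolding row_colors_def col_colors_def by auto

lemma latin_like_transpose: "latin_like n k L \<Longrightarrow> latin_like n k (L \<circ> prod.swap)"
  unfolding latin_like_def cells_def by auto

lemma latin_like_range: "latin_like n k L \<Longrightarrow> i \<in> {1..n} \<Longrightarrow> j \<in> {1..n} \<Longrightarrow> L (i, j) \<in> {1..k}"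
  unfolding latin_like_def cells_def by blast

lemma latin_like_row_eq_iff:
  "latin_like n k L \<Longrightarrow> i \<in> {1..n} \<Longrightarrow> j \<in> {1..n} \<Longrightarrow> j' \<in> {1..n} \<Longrightarrow>
    L (i, j) = L (i, j') \<longleftrightarrow> j = j'"
  unfolding latin_like_def by blast

lemma latin_like_col_eq_iff:
  "latin_like n k L \<Longrightarrow> j \<in> {1..n} \<Longrightarrow> i \<in> {1..n} \<Longrightarrow> i' \<in> {1..n} \<Longrightarrow>
    L (i, j) = L (i', j) \<longleftrightarrow> i = i'"
  unfolding latin_like_def by blast

lemma card_row_colors: "latin_like n k L \<Longrightarrow> i \<in> {1..n} \<Longrightarrow> card (row_colors n L i) = n"
  unfolding row_colors_def
  by (subst card_image) (auto intro: inj_onI simp: latin_like_row_eq_iff)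

lemma card_col_colors: "latin_like n k L \<Longrightarrow> j \<in> {1..n} \<Longrightarrow> card (col_colors n L j) = n"
  using card_row_colors[OF latin_like_transpose] by (metis row_colors_transpose)

lemma latin_like_update:
  assumes latin: "latin_like n k L" and S: "S \<subseteq> cells n"
    and out: "\<And>c. c \<notin> S \<Longrightarrow> L' c = L c"
    and range: "\<And>c. c \<in> S \<Longrightarrow> L' c \<in> {1..k}"
    and row: "\<And>i j j'. (i, j) \<in> S \<Longrightarrow> j' \<in> {1..n} \<Longrightarrow> j' \<noteq> j \<Longrightarrow> L' (i, j') \<noteq> L' (i, j)"
    and col: "\<And>i j i'. (i, j) \<in> S \<Longrightarrow> i' \<in> {1..n} \<Longrightarrow> i' \<noteq> i \<Longrightarrow> L' (i', j) \<noteq> L' (i, j)"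
  shows "latin_like n k L'"
  unfolding latin_like_def
proof (intro conjI ballI allI impI)
  fix c assume "c \<notin> cells n"
  with S out[of c] latin show "L' c = 0" unfolding latin_like_def by auto
next
  fix c assume "c \<in> cells n"
  with latin range out show "L' c \<in> {1..k}" unfolding latin_like_def by (cases "c \<in> S") auto
next
  fix i j j' assume "i \<in> {1..n}" "j \<in> {1..n}" "j' \<in> {1..n}" "j \<noteq> j'"
  with latin row[of i j j'] row[of i j' j] out[of "(i, j)"] out[of "(i, j')"]
  show "L' (i, j) \<noteq> L' (i, j')" unfolding latin_like_def by metis
next
  fix j i i' assume "j \<in> {1..n}" "i \<in> {1..n}" "i' \<in> {1..n}" "i \<noteq> i'"
  with latin col[of i j i'] col[of i' j i] out[of "(i, j)"] out[of "(i', j)"]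
  show "L' (i, j) \<noteq> L' (i', j)" unfolding latin_like_def by metis
qed

lemma latin_like_recolor_cell:
  assumes latin: "latin_like n k L" and ij: "i \<in> {1..n}" "j \<in> {1..n}" and v: "v \<in> {1..k}"
    and fresh: "v \<notin> row_colors n L i" "v \<notin> col_colors n L j"
  shows "latin_like n k (L((i, j) := v))"
proof (rule latin_like_update[OF latin, of "{(i, j)}"])
  fix i0 j0 j' assume "(i0, j0) \<in> {(i, j)}" "j' \<in> {1..n}" "j' \<noteq> j0"
  then show "(L((i, j) := v)) (i0, j') \<noteq> (L((i, j) := v)) (i0, j0)"
    using fresh row_colorsI[of j' n L i] by auto
next
  fix i0 j0 i' assume "(i0, j0) \<in> {(i, j)}" "i' \<in> {1..n}" "i' \<noteq> i0"
  then show "(L((i, j) := v)) (i', j0) \<noteq> (L((i, j) := v)) (i0, j0)"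
    using fresh col_colorsI[of i' n L j] by auto
qed (use ij v in \<open>auto simp: cells_def\<close>)

lemma latin_like_permute_row:
  assumes latin: "latin_like n k L" and i: "i \<in> {1..n}" and J: "J \<subseteq> {1..n}" and \<sigma>: "bij_betw \<sigma> J J"
    and fresh: "\<And>j. j \<in> J \<Longrightarrow> \<sigma> j \<noteq> j \<Longrightarrow> L (i, \<sigma> j) \<notin> col_colors n L j"
  shows "latin_like n k (\<lambda>c. if fst c = i \<and> snd c \<in> J then L (i, \<sigma> (snd c)) else L c)"
    (is "latin_like n k ?L'")
proof -
  have Jn: "j \<in> {1..n}" if "j \<in> J" for j using J that by blast
  have \<sigma>J: "\<sigma> j \<in> J" if "j \<in> J" for j using \<sigma> that by (auto dest: bij_betw_apply)
  have row_inj: "L (i, a) = L (i, b) \<longleftrightarrow> a = b" if "a \<in> {1..n}" "b \<in> {1..n}" for a b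
    using latin_like_row_eq_iff[OF latin i that] .
  show ?thesis
  proof (rule latin_like_update[OF latin, of "{i} \<times> J"])
    fix r c c' assume c: "(r, c) \<in> {i} \<times> J" and c': "c' \<in> {1..n}" "c' \<noteq> c"
    have r: "r = i" and cJ: "c \<in> J" using c by auto
    show "?L' (r, c') \<noteq> ?L' (r, c)"
    proof (cases "c' \<in> J")
      case True
      then have "\<sigma> c' \<noteq> \<sigma> c" using cJ c'(2) \<sigma> by (metis bij_betw_inv_into_left)
      then show ?thesis using True r cJ \<sigma>J Jn row_inj by simp
    next
      case False
      then have "c' \<noteq> \<sigma> c" using cJ \<sigma>J by blast
      then show ?thesis using False r cJ c'(1) \<sigma>J Jn row_inj by simp
    qed
  next
    fix r c r' assume c: "(r, c) \<in> {i} \<times> J" and r': "r' \<in> {1..n}" "r' \<noteq> r"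
    have L': "?L' (r', c) = L (r', c)" "?L' (r, c) = L (i, \<sigma> c)" using c r' by auto
    show "?L' (r', c) \<noteq> ?L' (r, c)"
    proof (cases "\<sigma> c = c")
      case True
      then show ?thesis using L' c r' i Jn latin_like_col_eq_iff[OF latin, of c r' i] by auto
    next
      case False
      then have "L (i, \<sigma> c) \<notin> col_colors n L c" using fresh c by auto
      then show ?thesis using L' r' col_colorsI[of r' n L c] by auto
    qed
  next
    fix c assume "c \<in> {i} \<times> J"
    then obtain j where "c = (i, j)" "j \<in> J" by auto
    then show "?L' c \<in> {1..k}" using latin_like_range[OF latin i Jn[OF \<sigma>J]] by simp
  next
    show "{i} \<times> J \<subseteq> cells n" using i J unfolding cells_def by blast
  qed auto
qed

lemma latin_like_rotate_rectangle:
  assumes latin: "latin_like n k L" and ij: "i \<in> {1..n}" "j \<in> {1..n}" "i' \<in> {1..n}" "j' \<in> {1..n}"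
    and d: "i \<noteq> i'" "j \<noteq> j'"
    and fresh: "L (i, j') \<notin> col_colors n L j - {L (i', j)}" "L (i', j') \<notin> row_colors n L i - {L (i, j)}"
      "L (i', j) \<notin> col_colors n L j' - {L (i, j')}" "L (i, j) \<notin> row_colors n L i' - {L (i', j')}"
  shows "latin_like n k (L((i, j) := L (i, j'), (i, j') := L (i', j'), (i', j') := L (i', j), (i', j) := L (i, j)))"
proof -
  define a b e c where "a = L (i, j)" and "b = L (i, j')" and "e = L (i', j)" and "c = L (i', j')"
  have row_inj: "L (r, s) = L (r, s') \<longleftrightarrow> s = s'" if "r \<in> {1..n}" "s \<in> {1..n}" "s' \<in> {1..n}" for r s s'
    using latin_like_row_eq_iff[OF latin that] .
  have col_inj: "L (r, s) = L (r', s) \<longleftrightarrow> r = r'" if "s \<in> {1..n}" "r \<in> {1..n}" "r' \<in> {1..n}" for r r' s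
    using latin_like_col_eq_iff[OF latin that] .
  have dist: "a \<noteq> b" "e \<noteq> c" "a \<noteq> e" "b \<noteq> c"
    unfolding a_def b_def e_def c_def
    using row_inj[OF ij(1) ij(2) ij(4)] row_inj[OF ij(3) ij(2) ij(4)]
      col_inj[OF ij(2) ij(1) ij(3)] col_inj[OF ij(4) ij(1) ij(3)] d by simp_all
  have fresh': "b \<in> col_colors n L j \<Longrightarrow> b = e" "c \<in> row_colors n L i \<Longrightarrow> c = a"
    "e \<in> col_colors n L j' \<Longrightarrow> e = b" "a \<in> row_colors n L i' \<Longrightarrow> a = c"
    using fresh unfolding a_def b_def e_def c_def by blast+
  have in_row: "L (i, s) \<noteq> b" "L (i', s) \<noteq> e" "L (i, s) \<noteq> c" "L (i', s) \<noteq> a"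
    if s: "s \<in> {1..n}" "s \<noteq> j" "s \<noteq> j'" for s
  proof -
    have "L (i, s) \<noteq> a" "L (i, s) \<noteq> b" "L (i', s) \<noteq> e" "L (i', s) \<noteq> c"
      unfolding a_def b_def e_def c_def
      using row_inj[OF ij(1) s(1) ij(2)] row_inj[OF ij(1) s(1) ij(4)]
        row_inj[OF ij(3) s(1) ij(2)] row_inj[OF ij(3) s(1) ij(4)] s(2,3) by simp_all
    moreover have "L (i, s) \<in> row_colors n L i" "L (i', s) \<in> row_colors n L i'"
      using row_colorsI s(1) by auto
    ultimately show "L (i, s) \<noteq> b" "L (i', s) \<noteq> e" "L (i, s) \<noteq> c" "L (i', s) \<noteq> a"
      using fresh' by metis+
  qed
  have in_col: "L (r, j) \<noteq> a" "L (r, j') \<noteq> c" "L (r, j) \<noteq> b" "L (r, j') \<noteq> e"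
    if r: "r \<in> {1..n}" "r \<noteq> i" "r \<noteq> i'" for r
  proof -
    have "L (r, j) \<noteq> a" "L (r, j) \<noteq> e" "L (r, j') \<noteq> b" "L (r, j') \<noteq> c"
      unfolding a_def b_def e_def c_def
      using col_inj[OF ij(2) r(1) ij(1)] col_inj[OF ij(2) r(1) ij(3)]
        col_inj[OF ij(4) r(1) ij(1)] col_inj[OF ij(4) r(1) ij(3)] r(2,3) by simp_all
    moreover have "L (r, j) \<in> col_colors n L j" "L (r, j') \<in> col_colors n L j'"
      using col_colorsI r(1) by auto
    ultimately show "L (r, j) \<noteq> a" "L (r, j') \<noteq> c" "L (r, j) \<noteq> b" "L (r, j') \<noteq> e"
      using fresh' by metis+
  qed
  have range: "a \<in> {1..k}" "b \<in> {1..k}" "e \<in> {1..k}" "c \<in> {1..k}"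
    unfolding a_def b_def e_def c_def using latin_like_range[OF latin] ij by simp_all
  let ?S = "{(i, j), (i, j'), (i', j'), (i', j)}"
  let ?L' = "L((i, j) := b, (i, j') := c, (i', j') := e, (i', j) := a)"
  have L'_row: "?L' (i, s) = (if s = j then b else if s = j' then c else L (i, s))"
    "?L' (i', s) = (if s = j then a else if s = j' then e else L (i', s))" for s
    using d by auto
  have L'_col: "?L' (r, j) = (if r = i then b else if r = i' then a else L (r, j))"
    "?L' (r, j') = (if r = i then c else if r = i' then e else L (r, j'))" for r
    using d by auto
  have "latin_like n k ?L'"
  proof (rule latin_like_update[OF latin, of ?S])
    fix r s s' assume "(r, s) \<in> ?S" and s': "s' \<in> {1..n}" "s' \<noteq> s"
    then have "r = i \<or> r = i'" "s = j \<or> s = j'" by auto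
    then show "?L' (r, s') \<noteq> ?L' (r, s)"
      using s'(2) d dist in_row[OF s'(1)] by (elim disjE) (simp_all add: L'_row)
  next
    fix r s r' assume "(r, s) \<in> ?S" and r': "r' \<in> {1..n}" "r' \<noteq> r"
    then have "r = i \<or> r = i'" "s = j \<or> s = j'" by auto
    then show "?L' (r', s) \<noteq> ?L' (r, s)"
      using r'(2) d dist in_col[OF r'(1)] by (elim disjE) (simp_all add: L'_col)
  next
    fix p assume "p \<in> ?S"
    then show "?L' p \<in> {1..k}" using range by auto
  qed (use ij in \<open>auto simp: cells_def\<close>)
  then show ?thesis unfolding a_def b_def e_def c_def .
qed

section \<open>Unique completions\<close>

locale unique_completion =
  fixes n k :: nat and L :: "nat \<times> nat \<Rightarrow> nat" and U :: "(nat \<times> nat) set"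
  assumes latin: "latin_like n k L"
    and U_subset: "U \<subseteq> cells n"
    and unique: "\<And>L'. latin_like n k L' \<Longrightarrow> \<forall>c\<in>cells n - U. L' c = L c \<Longrightarrow> L' = L"
begin

abbreviation "Row \<equiv> row_colors n L"
abbreviation "Col \<equiv> col_colors n L"

lemma U_index_bounds: "(i, j) \<in> U \<Longrightarrow> i \<in> {1..n} \<and> j \<in> {1..n}"
  using U_subset unfolding cells_def by auto

lemma transpose_completion: "unique_completion n k (L \<circ> prod.swap) (prod.swap ` U)"
proof
  show "latin_like n k (L \<circ> prod.swap)" using latin by (rule latin_like_transpose)
  show "prod.swap ` U \<subseteq> cells n" using U_subset unfolding cells_def by auto
next
  fix L' assume "latin_like n k L'" and agree: "\<forall>c\<in>cells n - prod.swap ` U. L' c = (L \<circ> prod.swap) c"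
  from this(1) have "latin_like n k (L' \<circ> prod.swap)" by (rule latin_like_transpose)
  moreover have "\<forall>c\<in>cells n - U. (L' \<circ> prod.swap) c = L c"
    using agree unfolding cells_def by auto
  ultimately have "L' \<circ> prod.swap = L" by (rule unique)
  then show "L' = L \<circ> prod.swap" by (auto simp: fun_eq_iff)
qed

lemma color_in_row_or_col:
  assumes ij: "(i, j) \<in> U" and v: "v \<in> {1..k}"
  shows "v \<in> Row i \<or> v \<in> Col j"
proof (rule ccontr)
  assume fresh: "\<not> ?thesis"
  have "latin_like n k (L((i, j) := v))"
    using latin_like_recolor_cell[OF latin _ _ v] U_index_bounds[OF ij] fresh by blast
  moreover have "\<forall>c\<in>cells n - U. (L((i, j) := v)) c = L c" using ij by auto
  ultimately have "L((i, j) := v) = L" by (rule unique)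
  then have "L (i, j) = v" by (metis fun_upd_same)
  then show False using fresh row_colorsI[of j n L i] U_index_bounds[OF ij] by auto
qed

lemma card_common_colors:
  assumes ij: "(i, j) \<in> U"
  shows "k + card (Row i \<inter> Col j) \<le> 2 * n"
proof -
  have fin: "finite (Row i)" "finite (Col j)" unfolding row_colors_def col_colors_def by auto
  have "{1..k} \<subseteq> Row i \<union> Col j" using color_in_row_or_col[OF ij] by blast
  then have "k \<le> card (Row i \<union> Col j)" using card_mono[of "Row i \<union> Col j" "{1..k}"] fin by simp
  moreover have "card (Row i \<union> Col j) + card (Row i \<inter> Col j) = 2 * n"
    using card_Un_Int[OF fin] card_row_colors[OF latin] card_col_colors[OF latin] U_index_bounds[OF ij]
    by simp
  ultimately show ?thesis by linarith
qed

lemma row_permutation_conflict: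
  assumes J: "\<And>j. j \<in> J \<Longrightarrow> (i, j) \<in> U" and \<sigma>: "bij_betw \<sigma> J J"
    and moved: "j0 \<in> J" "\<sigma> j0 \<noteq> j0"
  shows "\<exists>j\<in>J. \<sigma> j \<noteq> j \<and> L (i, \<sigma> j) \<in> Col j"
proof (rule ccontr)
  assume "\<not> ?thesis"
  let ?L' = "\<lambda>c. if fst c = i \<and> snd c \<in> J then L (i, \<sigma> (snd c)) else L c"
  have Jn: "J \<subseteq> {1..n}" and i: "i \<in> {1..n}" using J U_index_bounds moved(1) by blast+
  with \<open>\<not> ?thesis\<close> have "latin_like n k ?L'" using latin_like_permute_row[OF latin i Jn \<sigma>] by blast
  moreover have "\<forall>c\<in>cells n - U. ?L' c = L c" using J by auto
  ultimately have "?L' = L" by (rule unique)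
  then have "L (i, \<sigma> j0) = L (i, j0)" using fun_cong[of ?L' L "(i, j0)"] moved(1) by simp
  moreover have "\<sigma> j0 \<in> {1..n}" "j0 \<in> {1..n}" using Jn \<sigma> moved(1) by (auto dest: bij_betw_apply)
  ultimately show False using latin_like_row_eq_iff[OF latin i] moved(2) by blast
qed

lemma row_swap_conflict:
  assumes "(i, j) \<in> U" "(i, j') \<in> U" "j \<noteq> j'"
  shows "L (i, j') \<in> Col j \<or> L (i, j) \<in> Col j'"
proof -
  have "bij_betw (\<lambda>x. if x = j then j' else j) {j, j'} {j, j'}"
    by (auto simp: bij_betw_def inj_on_def)
  from row_permutation_conflict[OF _ this, of i j] assms show ?thesis by auto
qed

lemma col_swap_conflict:
  assumes "(i, j) \<in> U" "(i', j) \<in> U" "i \<noteq> i'"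
  shows "L (i', j) \<in> Row i \<or> L (i, j) \<in> Row i'"
proof -
  interpret T: unique_completion n k "L \<circ> prod.swap" "prod.swap ` U"
    by (rule transpose_completion)
  from T.row_swap_conflict[of j i i'] assms show ?thesis by simp
qed

lemma row_cycle_conflict:
  assumes "(i, j1) \<in> U" "(i, j2) \<in> U" "(i, j3) \<in> U" "j1 \<noteq> j2" "j1 \<noteq> j3" "j2 \<noteq> j3"
  shows "L (i, j2) \<in> Col j1 \<or> L (i, j3) \<in> Col j2 \<or> L (i, j1) \<in> Col j3"
proof -
  let ?\<sigma> = "\<lambda>x. if x = j1 then j2 else if x = j2 then j3 else j1"
  have "bij_betw ?\<sigma> {j1, j2, j3} {j1, j2, j3}"
    using assms(4-6) by (auto simp: bij_betw_def inj_on_def)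
  from row_permutation_conflict[OF _ this, of i j1] assms show ?thesis by auto
qed

lemma rectangle_rotation_conflict:
  assumes x: "(i, j) \<in> U" and y: "(i, j') \<in> U" and z: "(i', j) \<in> U" and w: "(i', j') \<in> U"
    and d: "i \<noteq> i'" "j \<noteq> j'"
  shows "L (i, j') \<in> Col j - {L (i', j)} \<or> L (i', j') \<in> Row i - {L (i, j)} \<or>
    L (i', j) \<in> Col j' - {L (i, j')} \<or> L (i, j) \<in> Row i' - {L (i', j')}"
proof (rule ccontr)
  assume "\<not> ?thesis"
  let ?L' = "L((i, j) := L (i, j'), (i, j') := L (i', j'), (i', j') := L (i', j), (i', j) := L (i, j))"
  have ij: "i \<in> {1..n}" "j \<in> {1..n}" "i' \<in> {1..n}" "j' \<in> {1..n}"
    using U_index_bounds[OF x] U_index_bounds[OF w] by auto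
  with \<open>\<not> ?thesis\<close> have "latin_like n k ?L'"
    using latin_like_rotate_rectangle[OF latin _ _ _ _ d] by blast
  moreover have "\<forall>c\<in>cells n - U. ?L' c = L c" using x y z w by auto
  ultimately have "?L' = L" by (rule unique)
  moreover have "?L' (i, j) = L (i, j')" using d by simp
  ultimately have "L (i, j') = L (i, j)" by simp
  then show False using latin_like_row_eq_iff[OF latin ij(1,2,4)] d by simp
qed

end

section \<open>Forbidden configurations of uncolored cells\<close>

locale unique_completion_many_colors = unique_completion +
  assumes many_colors: "2 * n \<le> k + 2"
begin

lemma transpose_many_colors: "unique_completion_many_colors n k (L \<circ> prod.swap) (prod.swap ` U)"
  using transpose_completion many_colors
  by (simp add: unique_completion_many_colors_def unique_completion_many_colors_axioms_def)

lemma no_three_common_colors: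
  assumes "(i, j) \<in> U" and "u \<in> Row i" "u \<in> Col j" "v \<in> Row i" "v \<in> Col j" "w \<in> Row i" "w \<in> Col j"
  shows "u = v \<or> u = w \<or> v = w"
proof (rule ccontr)
  assume "\<not> ?thesis"
  then have "card {u, v, w} = 3" by auto
  moreover have "card {u, v, w} \<le> card (Row i \<inter> Col j)"
    using assms(2-) by (intro card_mono) (auto simp: row_colors_def)
  ultimately show False
    using card_common_colors[OF assms(1)] many_colors by linarith
qed

lemma no_three_in_row:
  assumes x1: "(i, j1) \<in> U" and x2: "(i, j2) \<in> U" and x3: "(i, j3) \<in> U"
  shows "j1 = j2 \<or> j1 = j3 \<or> j2 = j3"
proof (rule ccontr)
  assume "\<not> ?thesis"
  then have d: "j1 \<noteq> j2" "j1 \<noteq> j3" "j2 \<noteq> j3" by auto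
  have ij: "i \<in> {1..n}" "j1 \<in> {1..n}" "j2 \<in> {1..n}" "j3 \<in> {1..n}"
    using U_index_bounds x1 x2 x3 by auto
  define a1 a2 a3 where "a1 = L (i, j1)" and "a2 = L (i, j2)" and "a3 = L (i, j3)"
  have dist: "a1 \<noteq> a2" "a1 \<noteq> a3" "a2 \<noteq> a3"
    unfolding a1_def a2_def a3_def using latin_like_row_eq_iff[OF latin] ij d by simp_all
  have lines: "a1 \<in> Row i" "a2 \<in> Row i" "a3 \<in> Row i" "a1 \<in> Col j1" "a2 \<in> Col j2" "a3 \<in> Col j3"
    unfolding a1_def a2_def a3_def using row_colorsI col_colorsI ij by auto
  have "\<not> (a2 \<in> Col j1 \<and> a3 \<in> Col j1)"
    using no_three_common_colors[OF x1, of a1 a2 a3] lines dist by blast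
  moreover have "\<not> (a1 \<in> Col j2 \<and> a3 \<in> Col j2)"
    using no_three_common_colors[OF x2, of a1 a2 a3] lines dist by blast
  moreover have "\<not> (a1 \<in> Col j3 \<and> a2 \<in> Col j3)"
    using no_three_common_colors[OF x3, of a1 a2 a3] lines dist by blast
  moreover have "a2 \<in> Col j1 \<or> a1 \<in> Col j2" "a3 \<in> Col j1 \<or> a1 \<in> Col j3" "a3 \<in> Col j2 \<or> a2 \<in> Col j3"
    unfolding a1_def a2_def a3_def using row_swap_conflict x1 x2 x3 d by blast+
  moreover have "a2 \<in> Col j1 \<or> a3 \<in> Col j2 \<or> a1 \<in> Col j3" "a3 \<in> Col j1 \<or> a2 \<in> Col j3 \<or> a1 \<in> Col j2"
    unfolding a1_def a2_def a3_def using row_cycle_conflict[OF x1 x2 x3 d] row_cycle_conflict[OF x1 x3 x2] d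
    by blast+
  \<comment> \<open>By the swaps, in each pair one cell's color occurs in the other's column; a column admits
    only one such color, so the pairs point cyclically and one of the two 3-cycles is conflict-free.\<close>
  ultimately show False by blast
qed

lemma no_three_in_col:
  assumes "(i1, j) \<in> U" "(i2, j) \<in> U" "(i3, j) \<in> U"
  shows "i1 = i2 \<or> i1 = i3 \<or> i2 = i3"
proof -
  interpret T: unique_completion_many_colors n k "L \<circ> prod.swap" "prod.swap ` U"
    by (rule transpose_many_colors)
  from T.no_three_in_row[of j i1 i2 i3] assms show ?thesis by simp
qed

context
  fixes i j i' j' a b e c :: nat
  assumes rectangle: "(i, j) \<in> U" "(i, j') \<in> U" "(i', j) \<in> U" "(i', j') \<in> U"
    and sides: "i \<noteq> i'" "j \<noteq> j'"
    and corners: "L (i, j) = a" "L (i, j') = b" "L (i', j) = e" "L (i', j') = c"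
begin

private lemma rectangle_lines:
  "a \<in> Row i" "b \<in> Row i" "e \<in> Row i'" "c \<in> Row i'"
  "a \<in> Col j" "e \<in> Col j" "b \<in> Col j'" "c \<in> Col j'"
  unfolding corners[symmetric]
  using row_colorsI col_colorsI U_index_bounds[OF rectangle(1)] U_index_bounds[OF rectangle(4)]
  by auto

private lemma rectangle_distinct: "a \<noteq> b" "e \<noteq> c" "a \<noteq> e" "b \<noteq> c"
  unfolding corners[symmetric]
  using latin_like_row_eq_iff[OF latin] latin_like_col_eq_iff[OF latin] sides
    U_index_bounds[OF rectangle(1)] U_index_bounds[OF rectangle(4)]
  by simp_all

private lemma rectangle_swaps:
  "b \<in> Col j \<or> a \<in> Col j'" "c \<in> Col j \<or> e \<in> Col j'"
  "e \<in> Row i \<or> a \<in> Row i'" "c \<in> Row i \<or> b \<in> Row i'"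
  unfolding corners[symmetric] using row_swap_conflict col_swap_conflict rectangle sides by blast+

private lemma rectangle_rotations:
  "b \<in> Col j \<and> b \<noteq> e \<or> c \<in> Row i \<and> c \<noteq> a \<or> e \<in> Col j' \<and> e \<noteq> b \<or> a \<in> Row i' \<and> a \<noteq> c"
  "c \<in> Col j \<and> c \<noteq> a \<or> b \<in> Row i' \<and> b \<noteq> e \<or> a \<in> Col j' \<and> a \<noteq> c \<or> e \<in> Row i \<and> e \<noteq> b"
  unfolding corners[symmetric]
  using rectangle_rotation_conflict[OF rectangle sides]
    rectangle_rotation_conflict[OF rectangle(3,4,1,2) sides(1)[symmetric] sides(2)]
  by blast+

private lemmas common_x = no_three_common_colors[OF rectangle(1)]
  and common_y = no_three_common_colors[OF rectangle(2)]
  and common_z = no_three_common_colors[OF rectangle(3)]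
  and common_w = no_three_common_colors[OF rectangle(4)]

private lemma anti_diagonal_distinct: "b \<noteq> e"
proof
  assume "b = e"
  show False
  proof (cases "a = c")
    case False
    have "\<not> (c \<in> Row i \<and> c \<in> Col j)"
      using common_x[of a b c] rectangle_lines rectangle_distinct False \<open>b = e\<close> by blast
    moreover have "\<not> (a \<in> Row i' \<and> a \<in> Col j')"
      using common_w[of c e a] rectangle_lines rectangle_distinct False \<open>b = e\<close> by blast
    moreover have "\<not> (c \<in> Row i \<and> a \<in> Col j')"
      using common_y[of b c a] rectangle_lines rectangle_distinct False by blast
    moreover have "\<not> (a \<in> Row i' \<and> c \<in> Col j)"
      using common_z[of e a c] rectangle_lines rectangle_distinct False by blast
    ultimately show False using rectangle_rotations \<open>b = e\<close> by blast
  qed (use rectangle_rotations \<open>b = e\<close> in blast)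
qed

private lemma diagonal_distinct: "a \<noteq> c"
proof
  assume "a = c"
  have "\<not> (b \<in> Col j \<and> b \<in> Row i')"
    using common_z[of e b c] rectangle_lines rectangle_distinct anti_diagonal_distinct \<open>a = c\<close> by blast
  moreover have "\<not> (e \<in> Col j' \<and> e \<in> Row i)"
    using common_y[of b e a] rectangle_lines rectangle_distinct anti_diagonal_distinct \<open>a = c\<close> by blast
  moreover have "\<not> (b \<in> Col j \<and> e \<in> Row i)"
    using common_x[of a b e] rectangle_lines rectangle_distinct anti_diagonal_distinct by blast
  moreover have "\<not> (e \<in> Col j' \<and> b \<in> Row i')"
    using common_w[of c e b] rectangle_lines rectangle_distinct anti_diagonal_distinct by blast
  ultimately show False using rectangle_rotations \<open>a = c\<close> by blast
qed

lemma no_rectangle_grid: False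
proof -
  note facts = rectangle_lines rectangle_distinct anti_diagonal_distinct diagonal_distinct
  have "\<not> (b \<in> Col j \<and> e \<in> Row i)" "\<not> (b \<in> Col j \<and> c \<in> Row i \<and> c \<in> Col j)"
    "\<not> (e \<in> Row i \<and> c \<in> Row i \<and> c \<in> Col j)"
    using common_x[of a b e] common_x[of a b c] common_x[of a e c] facts by blast+
  moreover have "\<not> (c \<in> Row i \<and> a \<in> Col j')" "\<not> (c \<in> Row i \<and> e \<in> Row i \<and> e \<in> Col j')"
    "\<not> (a \<in> Col j' \<and> e \<in> Row i \<and> e \<in> Col j')"
    using common_y[of b c a] common_y[of b c e] common_y[of b a e] facts by blast+
  moreover have "\<not> (a \<in> Row i' \<and> c \<in> Col j)" "\<not> (a \<in> Row i' \<and> b \<in> Row i' \<and> b \<in> Col j)"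
    "\<not> (c \<in> Col j \<and> b \<in> Row i' \<and> b \<in> Col j)"
    using common_z[of e a c] common_z[of e a b] common_z[of e c b] facts by blast+
  moreover have "\<not> (e \<in> Col j' \<and> b \<in> Row i')" "\<not> (e \<in> Col j' \<and> a \<in> Row i' \<and> a \<in> Col j')"
    "\<not> (b \<in> Row i' \<and> a \<in> Row i' \<and> a \<in> Col j')"
    using common_w[of c e b] common_w[of c e a] common_w[of c b a] facts by blast+
  moreover have "b \<in> Col j \<or> c \<in> Row i \<or> e \<in> Col j' \<or> a \<in> Row i'"
    "c \<in> Col j \<or> b \<in> Row i' \<or> a \<in> Col j' \<or> e \<in> Row i"
    using rectangle_rotations by blast+
  ultimately show False using rectangle_swaps by argo
qed

end

lemma no_rectangle:
  assumes "(i, j) \<in> U" "(i, j') \<in> U" "(i', j) \<in> U" "(i', j') \<in> U"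
  shows "i = i' \<or> j = j'"
  using no_rectangle_grid[OF assms _ _ refl refl refl refl] by blast

context
  fixes r1 r2 r3 c0 c1 c2 a1 a2 a3 a4 a5 g h p q :: nat
  assumes staircase: "(r1, c0) \<in> U" "(r1, c1) \<in> U" "(r2, c1) \<in> U" "(r2, c2) \<in> U" "(r3, c2) \<in> U"
    and rows_distinct: "r1 \<noteq> r2" "r1 \<noteq> r3" "r2 \<noteq> r3"
    and cols_distinct: "c0 \<noteq> c1" "c0 \<noteq> c2" "c1 \<noteq> c2"
    and grid: "L (r1, c0) = a1" "L (r1, c1) = a2" "L (r1, c2) = h"
      "L (r2, c0) = g" "L (r2, c1) = a3" "L (r2, c2) = a4"
      "L (r3, c0) = q" "L (r3, c1) = p" "L (r3, c2) = a5"
begin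

private lemma grid_indices: "r1 \<in> {1..n}" "r2 \<in> {1..n}" "r3 \<in> {1..n}" "c0 \<in> {1..n}" "c1 \<in> {1..n}" "c2 \<in> {1..n}"
  using U_index_bounds staircase by auto

private lemma grid_lines:
  "a1 \<in> Row r1" "a2 \<in> Row r1" "h \<in> Row r1" "g \<in> Row r2" "a3 \<in> Row r2" "a4 \<in> Row r2"
  "q \<in> Row r3" "p \<in> Row r3" "a5 \<in> Row r3"
  "a1 \<in> Col c0" "g \<in> Col c0" "q \<in> Col c0" "a2 \<in> Col c1" "a3 \<in> Col c1" "p \<in> Col c1"
  "h \<in> Col c2" "a4 \<in> Col c2" "a5 \<in> Col c2"
  unfolding grid[symmetric] using row_colorsI col_colorsI grid_indices by auto

private lemma grid_distinct:
  "a1 \<noteq> a2" "a1 \<noteq> h" "a2 \<noteq> h" "g \<noteq> a3" "g \<noteq> a4" "a3 \<noteq> a4" "q \<noteq> p" "q \<noteq> a5" "p \<noteq> a5"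
  "a1 \<noteq> g" "a1 \<noteq> q" "g \<noteq> q" "a2 \<noteq> a3" "a2 \<noteq> p" "a3 \<noteq> p" "h \<noteq> a4" "h \<noteq> a5" "a4 \<noteq> a5"
  unfolding grid[symmetric]
  using latin_like_row_eq_iff[OF latin] latin_like_col_eq_iff[OF latin] grid_indices
    rows_distinct cols_distinct
  by simp_all

private lemma colors_at_uncolored:
  "g \<in> Row r1 \<or> g \<in> Col c1" "q \<in> Row r1 \<or> q \<in> Col c1" "h \<in> Row r2 \<or> h \<in> Col c1"
  "p \<in> Row r2 \<or> p \<in> Col c2" "q \<in> Row r2 \<or> q \<in> Col c2" "a2 \<in> Row r2 \<or> a2 \<in> Col c2"
proof -
  have "g \<in> {1..k}" "h \<in> {1..k}" "p \<in> {1..k}" "q \<in> {1..k}" "a2 \<in> {1..k}"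
    unfolding grid[symmetric] using latin_like_range[OF latin] grid_indices by simp_all
  then show "g \<in> Row r1 \<or> g \<in> Col c1" "q \<in> Row r1 \<or> q \<in> Col c1" "h \<in> Row r2 \<or> h \<in> Col c1"
    "p \<in> Row r2 \<or> p \<in> Col c2" "q \<in> Row r2 \<or> q \<in> Col c2" "a2 \<in> Row r2 \<or> a2 \<in> Col c2"
    using color_in_row_or_col staircase by blast+
qed

private lemma staircase_swaps:
  "a2 \<in> Col c0 \<or> a1 \<in> Col c1" "a3 \<in> Row r1 \<or> a2 \<in> Row r2"
  "a4 \<in> Col c1 \<or> a3 \<in> Col c2" "a5 \<in> Row r2 \<or> a4 \<in> Row r3"
  unfolding grid[symmetric]
  using row_swap_conflict[OF staircase(1,2) cols_distinct(1)] col_swap_conflict[OF staircase(2,3) rows_distinct(1)]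
    row_swap_conflict[OF staircase(3,4) cols_distinct(3)] col_swap_conflict[OF staircase(4,5) rows_distinct(3)]
  by blast+

private lemmas common1 = no_three_common_colors[OF staircase(1)]
  and common2 = no_three_common_colors[OF staircase(2)]
  and common3 = no_three_common_colors[OF staircase(3)]
  and common4 = no_three_common_colors[OF staircase(4)]
  and common5 = no_three_common_colors[OF staircase(5)]

text \<open>A swap along the staircase points left (up) if the color of the right (lower) cell
  already occurs in the column (row) of the other cell, and right (down) otherwise.\<close>

private lemma not_left_left: "a2 \<in> Col c0 \<Longrightarrow> a4 \<in> Col c1 \<Longrightarrow> False"
proof -
  assume left1: "a2 \<in> Col c0" and left2: "a4 \<in> Col c1"
  have "g \<notin> Col c1" using common3[of g a3 a4] grid_lines grid_distinct left2 by blast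
  then have "g \<in> Row r1" using colors_at_uncolored by blast
  show False
  proof (cases "a2 = g")
    case True
    then show ?thesis using common3[of a2 a3 a4] grid_lines grid_distinct left2 by metis
  next
    case False
    then show ?thesis using common1[of a1 a2 g] \<open>g \<in> Row r1\<close> grid_lines grid_distinct left1 by blast
  qed
qed

private lemma not_right_right: "a1 \<in> Col c1 \<Longrightarrow> a3 \<in> Col c2 \<Longrightarrow> False"
proof -
  assume right1: "a1 \<in> Col c1" and right2: "a3 \<in> Col c2"
  have "h \<notin> Col c1" using common2[of a1 a2 h] grid_lines grid_distinct right1 by blast
  then have "h \<in> Row r2" using colors_at_uncolored by blast
  show False
  proof (cases "h = a3")
    case True
    then show ?thesis using common2[of a1 a2 a3] grid_lines grid_distinct right1 by metis
  next
    case False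
    then show ?thesis using common4[of h a3 a4] \<open>h \<in> Row r2\<close> grid_lines grid_distinct right2 by blast
  qed
qed

private lemma not_up_up: "a3 \<in> Row r1 \<Longrightarrow> a5 \<in> Row r2 \<Longrightarrow> False"
proof -
  assume up1: "a3 \<in> Row r1" and up2: "a5 \<in> Row r2"
  have "h \<notin> Row r2" using common4[of h a4 a5] grid_lines grid_distinct up2 by blast
  then have "h \<in> Col c1" using colors_at_uncolored by blast
  show False
  proof (cases "h = a3")
    case True
    then show ?thesis using common4[of a3 a4 a5] grid_lines grid_distinct up2 by metis
  next
    case False
    then show ?thesis using common2[of h a2 a3] \<open>h \<in> Col c1\<close> grid_lines grid_distinct up1 by blast
  qed
qed

private lemma not_down_down: "a2 \<in> Row r2 \<Longrightarrow> a4 \<in> Row r3 \<Longrightarrow> False"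
proof -
  assume down1: "a2 \<in> Row r2" and down2: "a4 \<in> Row r3"
  have "p \<notin> Row r2" using common3[of p a3 a2] grid_lines grid_distinct down1 by blast
  then have "p \<in> Col c2" using colors_at_uncolored by blast
  show False
  proof (cases "p = a4")
    case True
    then show ?thesis using common3[of a2 a3 a4] grid_lines grid_distinct down1 by metis
  next
    case False
    then show ?thesis using common5[of p a4 a5] \<open>p \<in> Col c2\<close> grid_lines grid_distinct down2 by blast
  qed
qed

private lemma not_left_up_right_down:
  "a2 \<in> Col c0 \<Longrightarrow> a3 \<in> Row r1 \<Longrightarrow> a3 \<in> Col c2 \<Longrightarrow> a4 \<in> Row r3 \<Longrightarrow> False"
proof -
  assume left1: "a2 \<in> Col c0" and up1: "a3 \<in> Row r1" and right2: "a3 \<in> Col c2" and down2: "a4 \<in> Row r3"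
  have "g \<in> Col c1"
  proof (cases "g \<in> Row r1")
    case True
    then have "g = a2" using common1[of a1 a2 g] grid_lines grid_distinct left1 by blast
    then show ?thesis using grid_lines by simp
  qed (use colors_at_uncolored in blast)
  have "q = a2"
  proof (cases "q \<in> Row r1")
    case True
    then show ?thesis using common1[of a1 a2 q] grid_lines grid_distinct left1 by blast
  next
    case False
    then have "q \<in> Col c1" using colors_at_uncolored by blast
    show ?thesis
    proof (cases "q \<in> Row r2")
      case True
      then have "q = a3" using common3[of a3 g q] \<open>q \<in> Col c1\<close> \<open>g \<in> Col c1\<close> grid_lines grid_distinct by blast
      then show ?thesis using common5[of a3 a4 a5] grid_lines grid_distinct right2 down2 by metis
    next
      case False
      then have "q \<in> Col c2" using colors_at_uncolored by blast
      then have "q = a4" using common5[of a5 a4 q] grid_lines grid_distinct down2 by blast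
      then show ?thesis using False grid_lines by simp
    qed
  qed
  show False
  proof (cases "a2 \<in> Row r2")
    case True
    then show False using common3[of a3 g a2] \<open>q = a2\<close> \<open>g \<in> Col c1\<close> grid_lines grid_distinct by metis
  next
    case False
    then have "a2 \<in> Col c2" "a2 \<noteq> a4" using colors_at_uncolored grid_lines by auto
    then show False using common5[of a5 a4 a2] \<open>q = a2\<close> grid_lines grid_distinct down2 by metis
  qed
qed

private lemma not_left_down_right_up:
  "a2 \<in> Col c0 \<Longrightarrow> a2 \<in> Row r2 \<Longrightarrow> a3 \<in> Col c2 \<Longrightarrow> a5 \<in> Row r2 \<Longrightarrow> False"
proof -
  assume left1: "a2 \<in> Col c0" and down1: "a2 \<in> Row r2" and right2: "a3 \<in> Col c2" and up2: "a5 \<in> Row r2"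
  have "a3 = a5" using common4[of a4 a3 a5] grid_lines grid_distinct right2 up2 by blast
  have "g = a2"
  proof (cases "g \<in> Row r1")
    case True
    then show ?thesis using common1[of a1 a2 g] grid_lines grid_distinct left1 by blast
  next
    case False
    then have "g \<in> Col c1" using colors_at_uncolored by blast
    then show ?thesis using common3[of a3 a2 g] grid_lines grid_distinct down1 by blast
  qed
  have "q \<notin> Row r1" using common1[of a1 a2 q] grid_lines grid_distinct left1 \<open>g = a2\<close> by blast
  then have "q \<in> Col c1" using colors_at_uncolored by blast
  have "q \<notin> Row r2"
    using common3[of a3 a2 q] \<open>q \<in> Col c1\<close> \<open>a3 = a5\<close> \<open>g = a2\<close> grid_lines grid_distinct down1 by metis
  then have "q \<in> Col c2" using colors_at_uncolored by blast
  have "p \<notin> Row r2" using common3[of a3 a2 p] grid_lines grid_distinct down1 by blast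
  then have "p \<in> Col c2" using colors_at_uncolored by blast
  then show False using common5[of a5 p q] \<open>q \<in> Col c2\<close> grid_lines grid_distinct by blast
qed

private lemma not_right_up_left_down:
  "a1 \<in> Col c1 \<Longrightarrow> a3 \<in> Row r1 \<Longrightarrow> a4 \<in> Col c1 \<Longrightarrow> a4 \<in> Row r3 \<Longrightarrow> False"
proof -
  assume right1: "a1 \<in> Col c1" and up1: "a3 \<in> Row r1" and left2: "a4 \<in> Col c1" and down2: "a4 \<in> Row r3"
  have "a1 = a3" using common2[of a2 a1 a3] grid_lines grid_distinct right1 up1 by blast
  have "g \<notin> Col c1" using common3[of a3 a4 g] grid_lines grid_distinct left2 by blast
  then have "g \<in> Row r1" using colors_at_uncolored by blast
  have "p = a4"
  proof (cases "p \<in> Row r2")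
    case True
    then show ?thesis using common3[of a3 a4 p] grid_lines grid_distinct left2 by blast
  next
    case False
    then have "p \<in> Col c2" using colors_at_uncolored by blast
    then show ?thesis using common5[of a5 a4 p] grid_lines grid_distinct down2 by blast
  qed
  have "q \<notin> Col c2" using common5[of a5 a4 q] \<open>p = a4\<close> grid_lines grid_distinct down2 by blast
  then have "q \<in> Row r2" using colors_at_uncolored by blast
  have "q \<notin> Col c1"
    using common3[of a3 a4 q] \<open>q \<in> Row r2\<close> \<open>p = a4\<close> \<open>a1 = a3\<close> grid_lines grid_distinct left2 by metis
  then have "q \<in> Row r1" using colors_at_uncolored by blast
  then show False using common1[of a1 g q] \<open>g \<in> Row r1\<close> grid_lines grid_distinct by blast
qed

private lemma not_right_up: "a1 \<in> Col c1 \<Longrightarrow> a5 \<in> Row r2 \<Longrightarrow> False"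
proof -
  assume right1: "a1 \<in> Col c1" and up2: "a5 \<in> Row r2"
  have "h \<notin> Col c1" using common2[of a2 a1 h] grid_lines grid_distinct right1 by blast
  then have "h \<in> Row r2" using colors_at_uncolored by blast
  then show False using common4[of a4 a5 h] grid_lines grid_distinct up2 by blast
qed

lemma no_staircase_grid: False
  using staircase_swaps not_left_left not_right_right not_up_up not_down_down
    not_left_up_right_down not_left_down_right_up not_right_up_left_down not_right_up
  by blast

end

lemma no_staircase:
  assumes "(r1, c0) \<in> U" "(r1, c1) \<in> U" "(r2, c1) \<in> U" "(r2, c2) \<in> U" "(r3, c2) \<in> U"
    and "r1 \<noteq> r2" "r1 \<noteq> r3" "r2 \<noteq> r3" "c0 \<noteq> c1" "c0 \<noteq> c2" "c1 \<noteq> c2"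
  shows False
  using no_staircase_grid[OF assms refl refl refl refl refl refl refl refl refl] .

lemma corner_has_end_mate:
  assumes x: "x \<in> U" and "has_mate fst U x" "has_mate snd U x"
  shows "\<exists>y\<in>U. y \<noteq> x \<and> (fst y = fst x \<and> \<not> has_mate snd U y \<or> snd y = snd x \<and> \<not> has_mate fst U y)"
proof (rule ccontr)
  assume no_end: "\<not> ?thesis"
  obtain y where y: "y \<in> U" "y \<noteq> x" "fst y = fst x" using \<open>has_mate fst U x\<close> unfolding has_mate_def by blast
  obtain z where z: "z \<in> U" "z \<noteq> x" "snd z = snd x" using \<open>has_mate snd U x\<close> unfolding has_mate_def by blast
  obtain y' where y': "y' \<in> U" "y' \<noteq> y" "snd y' = snd y"
    using no_end y unfolding has_mate_def by blast
  obtain z' where z': "z' \<in> U" "z' \<noteq> z" "fst z' = fst z"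
    using no_end z unfolding has_mate_def by blast
  obtain r2 c1 where xe: "x = (r2, c1)" by (cases x)
  obtain c2 where ye: "y = (r2, c2)" using y xe by (cases y) auto
  obtain r1 where ze: "z = (r1, c1)" using z xe by (cases z) auto
  obtain r3 where y'e: "y' = (r3, c2)" using y' ye by (cases y') auto
  obtain c0 where z'e: "z' = (r1, c0)" using z' ze by (cases z') auto
  have d: "c2 \<noteq> c1" "r1 \<noteq> r2" "r3 \<noteq> r2" "c0 \<noteq> c1" using y z y' z' xe ye ze y'e z'e by auto
  have cells: "(r1, c0) \<in> U" "(r1, c1) \<in> U" "(r2, c1) \<in> U" "(r2, c2) \<in> U" "(r3, c2) \<in> U"
    using x y z y' z' xe ye ze y'e z'e by auto
  show False
  proof (cases "r1 = r3")
    case True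
    show False
    proof (cases "c0 = c2")
      case True
      then show False using no_rectangle[of r1 c1 c2 r2] cells \<open>r1 = r3\<close> d by simp
    next
      case False
      then show False using no_three_in_row[of r1 c0 c1 c2] cells \<open>r1 = r3\<close> d by simp
    qed
  next
    case r1_ne_r3: False
    show False
    proof (cases "c0 = c2")
      case True
      then show False using no_three_in_col[of r1 c2 r2 r3] cells d r1_ne_r3 by simp
    next
      case False
      then show False using no_staircase[OF cells] d r1_ne_r3 by simp
    qed
  qed
qed

lemma at_most_two_per_row: "at_most_two_per_fibre fst U"
  unfolding at_most_two_per_fibre_def
proof (intro ballI impI)
  fix x y z assume "x \<in> U" "y \<in> U" "z \<in> U" and "fst y = fst x \<and> fst z = fst x"
  moreover obtain i j1 j2 j3 where "x = (i, j1)" "y = (i, j2)" "z = (i, j3)"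
    using \<open>fst y = fst x \<and> fst z = fst x\<close> by (cases x, cases y, cases z) auto
  ultimately show "x = y \<or> x = z \<or> y = z" using no_three_in_row[of i j1 j2 j3] by auto
qed

lemma at_most_two_per_col: "at_most_two_per_fibre snd U"
  unfolding at_most_two_per_fibre_def
proof (intro ballI impI)
  fix x y z assume "x \<in> U" "y \<in> U" "z \<in> U" and "snd y = snd x \<and> snd z = snd x"
  moreover obtain j i1 i2 i3 where "x = (i1, j)" "y = (i2, j)" "z = (i3, j)"
    using \<open>snd y = snd x \<and> snd z = snd x\<close> by (cases x, cases y, cases z) auto
  ultimately show "x = y \<or> x = z \<or> y = z" using no_three_in_col[of i1 j i2 i3] by auto
qed

theorem card_uncolored_le: "5 * card U \<le> 8 * n"
proof -
  have fin: "finite U" using U_subset finite_subset unfolding cells_def by blast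
  have lines: "fst ` U \<subseteq> {1..n}" "snd ` U \<subseteq> {1..n}" using U_subset unfolding cells_def by auto
  have "5 * card U \<le> 8 * card {1..n}"
    by (rule five_card_le_eight_card[OF fin finite_atLeastAtMost lines at_most_two_per_row at_most_two_per_col])
      (rule corner_has_end_mate)
  then show ?thesis by simp
qed

end

theorem theorem1:
  fixes n :: nat and A :: "nat \<times> nat \<Rightarrow> nat option"
  assumes "n \<ge> 1"
    and "partial_coloring n (2 * n - 2) A"
    and "uniquely_extends n (2 * n - 2) A"
  shows "real (card (uncolored n A)) \<le> 8 * real n / 5"
proof -
  let ?k = "2 * n - 2"
  obtain L where L: "L \<in> extensions n ?k A" and uniq: "\<And>L'. L' \<in> extensions n ?k A \<Longrightarrow> L' = L"
    using assms(3) unfolding uniquely_extends_def by blast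
  interpret unique_completion_many_colors n ?k L "uncolored n A"
  proof
    show "latin_like n ?k L" using L unfolding extensions_def by blast
    show "uncolored n A \<subseteq> cells n" unfolding uncolored_def by auto
    show "2 * n \<le> ?k + 2" by simp
      \<comment> \<open>also for n = 0\<close>
  next
    fix L' assume "latin_like n ?k L'" and "\<forall>c\<in>cells n - uncolored n A. L' c = L c"
    with L have "L' \<in> extensions n ?k A" unfolding extensions_def uncolored_def by auto
    then show "L' = L" by (rule uniq)
  qed
  from card_uncolored_le show ?thesis by simp
qed

end
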